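(* Let $0\le a\le\pi/2$, $n\in\mathbb N^*$ and $\ell\in\mathbb N$ with $\ell\ge n$. Then $$\int_a^{\pi/2}|v_{\ell,n}(x)|^2\cos x\,dx\ \ge\ C_{\ell,n}\cos^{2n+2}a,\qquad C_{\ell,n}=\frac{(2\ell+1)(n+1)}{2^{2n+2}}\,\frac{(\ell-n)!\,(\ell+n)!}{((\ell+1)!)^2}.$$
   Context: $v_{\ell,n}(x)=\sqrt{\frac{2\ell+1}{2}\frac{(\ell-n)!}{(\ell+n)!}}\,P_\ell^n(\sin x)$ for $x\in[-\pi/2,\pi/2]$, where $P_\ell^n(t)=(-1)^n(1-t^2)^{n/2}\frac{d^n}{dt^n}P_\ell(t)$ is the associated Legendre function of the first kind and $P_\ell$ is the Legendre polynomial of degree $\ell$. *)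

theory Defs
  imports "HOL-Analysis.Analysis" "HOL-Computational_Algebra.Polynomial"
begin

definition legendre_poly :: "nat \<Rightarrow> real poly" where
  "legendre_poly l = smult (1 / (2 ^ l * fact l)) ((pderiv ^^ l) ([:-1, 0, 1:] ^ l))"

text \<open>Associated Legendre function of the first kind (with Condon-Shortley phase):
  P_l^n(t) = (-1)^n (1 - t^2)^(n/2) (d/dt)^n P_l(t).\<close>
definition assoc_legendre :: "nat \<Rightarrow> nat \<Rightarrow> real \<Rightarrow> real" where
  "assoc_legendre l n t =
     (-1) ^ n * sqrt (1 - t\<^sup>2) ^ n * poly ((pderiv ^^ n) (legendre_poly l)) t"

definition v_fun :: "nat \<Rightarrow> nat \<Rightarrow> real \<Rightarrow> real" where
  "v_fun l n x =
     sqrt ((2 * real l + 1) / 2 * (fact (l - n) / fact (l + n))) * assoc_legendre l n (sin x)"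

end

(* Substituting t = sin x turns the integral into C * int_s^1 (1 - t^2)^n Q(t)^2 dt, where
   s = sin a and Q = P_l^(n) has degree m = l - n and Q(1) = (l + n)! / (2^n n! m!).
   On [s, 1] one has (1 - t^2)^n >= (1 + s)^n (1 - t)^n, and every polynomial q of degree
   at most m satisfies the Christoffel-type bound
     int_s^1 (1 - t)^n q(t)^2 dt >= (n + 1) (n! m! / (n + m + 1)!)^2 (1 - s)^(n + 1) q(1)^2.
   It is Cauchy-Schwarz against an explicit kernel K, a polynomial of degree m in 1 - t with
   int_s^1 (1 - t)^n q K = c * q(1) for all such q; its moments come from the partial
   fraction identity
     sum_k (-1)^k (m choose k) p(k) / (z + k) = p(-z) m! / (z (z + 1) ... (z + m))
   for deg p <= m. Bounding (1 + s)^(n + 1) by 2 (1 + s)^n gives the stated constant. *)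

theory Submission
  imports Defs
begin

section \<open>Alternating binomial sums\<close>

lemma alternating_binomial_sum_Suc:
  fixes g :: "nat \<Rightarrow> real"
  shows "(\<Sum>k\<le>Suc m. (-1)^k * real (Suc m choose k) * g k)
       = (\<Sum>k\<le>m. (-1)^k * real (m choose k) * (g k - g (Suc k)))"
proof -
  have "(\<Sum>k\<le>Suc m. (-1)^k * real (Suc m choose k) * g k)
      = g 0 + (\<Sum>k\<le>m. - ((-1)^k * real (m choose k) * g (Suc k))
                           - (-1)^k * real (m choose Suc k) * g (Suc k))"
    by (subst sum.atMost_Suc_shift) (simp add: algebra_simps)
  moreover have "(\<Sum>k\<le>Suc m. (-1)^k * real (m choose k) * g k)
      = g 0 - (\<Sum>k\<le>m. (-1)^k * real (m choose Suc k) * g (Suc k))"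
    by (subst sum.atMost_Suc_shift) (simp add: sum_negf)
  moreover have "(\<Sum>k\<le>Suc m. (-1)^k * real (m choose k) * g k)
      = (\<Sum>k\<le>m. (-1)^k * real (m choose k) * g k)"
    by simp
  ultimately show ?thesis
    by (simp add: right_diff_distrib sum_subtractf sum_negf)
qed

lemma degree_forward_difference_less:
  fixes p :: "'a::idom poly"
  assumes "degree p > 0"
  shows "degree (p - p \<circ>\<^sub>p [:1, 1:]) < degree p"
proof -
  let ?q = "p \<circ>\<^sub>p [:1, 1:]"
  have "degree ?q = degree p"
    by (simp add: degree_pcompose)
  moreover have "lead_coeff ?q = lead_coeff p"
    by (simp add: lead_coeff_comp)
  ultimately have "degree (p - ?q) \<le> degree p" "coeff (p - ?q) (degree p) = 0"
    using degree_diff_le[of p "degree p" ?q] by simp_all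
  with assms show ?thesis
    by (metis leading_coeff_0_iff degree_0 le_neq_implies_less)
qed

lemma alternating_binomial_sum_poly_eq_0:
  fixes p :: "real poly"
  assumes "degree p < m"
  shows "(\<Sum>k\<le>m. (-1)^k * real (m choose k) * poly p (real k)) = 0"
  using assms
proof (induction m arbitrary: p)
  case 0
  then show ?case by simp
next
  case (Suc m)
  have "(\<Sum>k\<le>Suc m. (-1)^k * real (Suc m choose k) * poly p (real k))
      = (\<Sum>k\<le>m. (-1)^k * real (m choose k) * poly (p - p \<circ>\<^sub>p [:1, 1:]) (real k))"
    by (subst alternating_binomial_sum_Suc) (simp add: poly_pcompose algebra_simps)
  also have "\<dots> = 0"
  proof (cases "degree p = 0")
    case True
    then obtain c where "p = [:c:]" by (rule degree_eq_zeroE)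
    then show ?thesis by simp
  next
    case False
    then show ?thesis
      using Suc.IH[of "p - p \<circ>\<^sub>p [:1, 1:]"] Suc.prems degree_forward_difference_less[of p]
      by simp
  qed
  finally show ?case .
qed

lemma alternating_binomial_sum_inverse:
  fixes z :: real
  assumes "z > 0"
  shows "(\<Sum>k\<le>m. (-1)^k * real (m choose k) / (z + real k)) = fact m / pochhammer z (Suc m)"
  using assms
proof (induction m arbitrary: z)
  case 0
  then show ?case by simp
next
  case (Suc m)
  have "(\<Sum>k\<le>Suc m. (-1)^k * real (Suc m choose k) / (z + real k))
      = (\<Sum>k\<le>m. (-1)^k * real (m choose k) * (1 / (z + real k) - 1 / (z + real (Suc k))))"
    using alternating_binomial_sum_Suc[of m "\<lambda>k. 1 / (z + real k)"] by simp
  also have "\<dots> = (\<Sum>k\<le>m. (-1)^k * real (m choose k) / (z + real k))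
                 - (\<Sum>k\<le>m. (-1)^k * real (m choose k) / (z + 1 + real k))"
    by (simp add: right_diff_distrib sum_subtractf add_ac)
  also have "\<dots> = fact m / pochhammer z (Suc m) - fact m / pochhammer (z + 1) (Suc m)"
    using Suc by simp
  also have "\<dots> = fact (Suc m) / pochhammer z (Suc (Suc m))"
  proof -
    define P where "P = pochhammer z (Suc m)"
    define w where "w = z + real (Suc m)"
    have "P > 0" "w > 0"
      unfolding P_def w_def using Suc.prems by (simp_all add: pochhammer_pos add_pos_nonneg)
    have step: "pochhammer z (Suc (Suc m)) = P * w"
      unfolding P_def w_def by (rule pochhammer_Suc)
    have shifted: "pochhammer (z + 1) (Suc m) = P * w / z"
      using Suc.prems unfolding step[symmetric] pochhammer_rec[of z "Suc m"] by simp
    have "fact m / P - fact m / (P * w / z) = fact m * (w - z) / (P * w)"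
      using \<open>P > 0\<close> \<open>w > 0\<close> Suc.prems by (simp add: field_simps)
    also have "\<dots> = fact (Suc m) / (P * w)"
      by (simp add: w_def)
    finally show ?thesis
      unfolding step shifted P_def[symmetric] .
  qed
  finally show ?case .
qed

lemma alternating_binomial_sum_poly_div:
  fixes p :: "real poly" and z :: real
  assumes "degree p \<le> m" "z > 0"
  shows "(\<Sum>k\<le>m. (-1)^k * real (m choose k) * poly p (real k) / (z + real k))
       = poly p (-z) * fact m / pochhammer z (Suc m)"
proof -
  define r where "r = synthetic_div p (-z)"
  have division: "poly p x = (x + z) * poly r x + poly p (-z)" for x
    using arg_cong[OF synthetic_div_correct'[where p = p and c = "-z"], of "\<lambda>q. poly q x"]
    unfolding r_def by (simp add: algebra_simps)
  have remainder_vanishes: "(\<Sum>k\<le>m. (-1)^k * real (m choose k) * poly r (real k)) = 0"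
  proof (cases "m = 0")
    case True
    with assms obtain c where "p = [:c:]"
      by (metis degree_eq_zeroE le_zero_eq)
    then show ?thesis
      by (simp add: r_def)
  next
    case False
    then show ?thesis
      using assms by (intro alternating_binomial_sum_poly_eq_0) (simp add: r_def degree_synthetic_div)
  qed
  have split: "(\<Sum>k\<le>m. (-1)^k * real (m choose k) * poly p (real k) / (z + real k))
      = (\<Sum>k\<le>m. (-1)^k * real (m choose k) * poly r (real k)
                  + poly p (-z) * ((-1)^k * real (m choose k) / (z + real k)))"
  proof (rule sum.cong[OF refl])
    fix k
    have "z + real k > 0"
      using \<open>z > 0\<close> by simp
    then show "(-1)^k * real (m choose k) * poly p (real k) / (z + real k)
        = (-1)^k * real (m choose k) * poly r (real k)
          + poly p (-z) * ((-1)^k * real (m choose k) / (z + real k))"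
      unfolding division[of "real k"] by (simp add: field_simps)
  qed
  show ?thesis
    unfolding split sum.distrib sum_distrib_left[symmetric] remainder_vanishes
      alternating_binomial_sum_inverse[OF \<open>z > 0\<close>]
    by simp
qed

lemma poly_pochhammer_linear: "poly (pochhammer [:c, 1:] m) x = pochhammer (x + c) m"
  by (induction m) (simp_all add: pochhammer_Suc algebra_simps)

lemma degree_pochhammer_linear_le: "degree (pochhammer [:c :: 'a::comm_semiring_1, 1:] m) \<le> m"
proof (induction m)
  case (Suc m)
  have "degree ([:c, 1:] + of_nat m :: 'a poly) \<le> 1"
    by (simp add: of_nat_poly)
  then show ?case
    unfolding pochhammer_Suc using Suc degree_mult_le[of "pochhammer [:c, 1:] m" "[:c, 1:] + of_nat m"]
    by linarith
qed simp

lemma fact_add_eq_fact_mult_pochhammer: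
  "fact (n + k) = (fact n * pochhammer (of_nat n + 1) k :: 'a::{semiring_char_0,comm_semiring_1})"
  using pochhammer_product'[of 1 n k] by (simp add: pochhammer_fact add.commute)

section \<open>A Christoffel-type bound for the weight (1 - t)^n\<close>

lemma has_integral_one_minus_power:
  fixes s :: real
  assumes "s \<le> 1"
  shows "((\<lambda>t. (1 - t)^p) has_integral (1 - s)^Suc p / real (Suc p)) {s..1}"
proof -
  have "((\<lambda>t. - ((1 - t)^Suc p / real (Suc p))) has_vector_derivative (1 - t)^p) (at t within {s..1})"
    for t
    unfolding has_real_derivative_iff_has_vector_derivative[symmetric]
    by (auto intro!: derivative_eq_intros simp del: power_Suc)
  from fundamental_theorem_of_calculus[OF assms this] show ?thesis
    by simp
qed

lemma weighted_cauchy_schwarz_has_integral: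
  fixes w f g :: "'a::euclidean_space \<Rightarrow> real"
  assumes "\<And>x. x \<in> S \<Longrightarrow> 0 \<le> w x"
    and "((\<lambda>x. w x * (f x)^2) has_integral F) S"
    and "((\<lambda>x. w x * f x * g x) has_integral B) S"
    and "((\<lambda>x. w x * (g x)^2) has_integral G) S"
    and "G > 0"
  shows "B^2 \<le> F * G"
proof -
  define c where "c = B / G"
  have "((\<lambda>x. w x * (f x)^2 - 2 * c * (w x * f x * g x) + c^2 * (w x * (g x)^2))
          has_integral F - 2 * c * B + c^2 * G) S"
    by (intro has_integral_add has_integral_diff has_integral_mult_right assms)
  moreover have "w x * (f x)^2 - 2 * c * (w x * f x * g x) + c^2 * (w x * (g x)^2)
      = w x * (f x - c * g x)^2" for x
    by (simp add: power2_eq_square algebra_simps)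
  ultimately have "0 \<le> F - 2 * c * B + c^2 * G"
    using assms(1) by (force intro: has_integral_nonneg)
  also have "\<dots> = F - B^2 / G"
    using \<open>G > 0\<close> by (simp add: c_def power2_eq_square field_simps)
  finally show ?thesis
    using \<open>G > 0\<close> by (simp add: field_simps)
qed

text \<open>The factor \<^term>\<open>pochhammer (real k + real n + 2) m\<close> vanishes at
  \<open>k = -(n + j + 1)\<close> for \<open>1 \<le> j \<le> m\<close>; by the partial fraction identity this kills the
  moments of the kernel against \<open>(1 - t)^(n + j)\<close> for those \<open>j\<close>.\<close>

definition christoffel_kernel :: "nat \<Rightarrow> nat \<Rightarrow> real \<Rightarrow> real \<Rightarrow> real" where
  "christoffel_kernel n m s t =
     (\<Sum>k\<le>m. (-1)^k * real (m choose k) * pochhammer (real k + real n + 2) m / (1 - s)^k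
              * (1 - t)^k)"

lemma christoffel_kernel_moment:
  fixes s :: real
  assumes "s < 1" "j \<le> m"
  shows "((\<lambda>t. (1 - t)^(n + j) * christoffel_kernel n m s t) has_integral
          (if j = 0 then (1 - s)^(n + 1) * (fact m)^2 / pochhammer (real n + 1) (Suc m) else 0))
         {s..1}"
proof -
  define d where "d = 1 - s"
  define c where "c k = (-1)^k * real (m choose k) * pochhammer (real k + real n + 2) m" for k
  have "d > 0"
    using assms by (simp add: d_def)
  have integral: "((\<lambda>t. \<Sum>k\<le>m. c k / d^k * (1 - t)^(n + j + k)) has_integral
          (\<Sum>k\<le>m. c k / d^k * (d^Suc (n + j + k) / real (Suc (n + j + k))))) {s..1}"
    unfolding d_def using assms
    by (intro has_integral_sum has_integral_mult_right has_integral_one_minus_power) auto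
  have integrand: "(\<lambda>t. \<Sum>k\<le>m. c k / d^k * (1 - t)^(n + j + k))
      = (\<lambda>t. (1 - t)^(n + j) * christoffel_kernel n m s t)"
    by (simp add: christoffel_kernel_def c_def d_def sum_distrib_left power_add algebra_simps)
  have "(\<Sum>k\<le>m. c k / d^k * (d^Suc (n + j + k) / real (Suc (n + j + k))))
      = d^(n + j + 1) * (\<Sum>k\<le>m. c k / (real (n + j + 1) + real k))"
    unfolding sum_distrib_left
  proof (rule sum.cong[OF refl])
    fix k
    have "d^Suc (n + j + k) = d^(n + j + 1) * d^k"
      by (simp add: power_add[symmetric])
    then show "c k / d^k * (d^Suc (n + j + k) / real (Suc (n + j + k)))
        = d^(n + j + 1) * (c k / (real (n + j + 1) + real k))"
      using \<open>d > 0\<close> by (simp add: field_simps)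
  qed
  also have "\<dots> = d^(n + j + 1) * (pochhammer (1 - real j) m * fact m
                                    / pochhammer (real (n + j + 1)) (Suc m))"
    using alternating_binomial_sum_poly_div[OF degree_pochhammer_linear_le[of "real n + 2" m],
        of "real (n + j + 1)"]
    by (simp add: c_def poly_pochhammer_linear algebra_simps)
  also have "\<dots> = (if j = 0 then d^(n + 1) * (fact m)^2 / pochhammer (real n + 1) (Suc m) else 0)"
  proof -
    have "pochhammer (1 - real j) m = (if j = 0 then fact m else 0)"
      using assms(2) by (auto simp: pochhammer_fact pochhammer_eq_0_iff intro!: exI[of _ "j - 1"])
    then show ?thesis
      by (simp add: power2_eq_square add.commute)
  qed
  finally have moment_value: "(\<Sum>k\<le>m. c k / d^k * (d^Suc (n + j + k) / real (Suc (n + j + k))))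
      = (if j = 0 then d^(n + 1) * (fact m)^2 / pochhammer (real n + 1) (Suc m) else 0)" .
  show ?thesis
    using integral unfolding integrand moment_value by (simp only: d_def)
qed

lemma christoffel_kernel_reproducing:
  fixes s :: real and c :: "nat \<Rightarrow> real"
  assumes "s < 1"
  shows "((\<lambda>t. (1 - t)^n * (\<Sum>j\<le>m. c j * (1 - t)^j) * christoffel_kernel n m s t) has_integral
          c 0 * ((1 - s)^(n + 1) * (fact m)^2 / pochhammer (real n + 1) (Suc m))) {s..1}"
proof -
  have "((\<lambda>t. \<Sum>j\<le>m. c j * ((1 - t)^(n + j) * christoffel_kernel n m s t)) has_integral
          (\<Sum>j\<le>m. c j * (if j = 0 then (1 - s)^(n + 1) * (fact m)^2 / pochhammer (real n + 1) (Suc m)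
                                else 0))) {s..1}"
    using assms by (intro has_integral_sum has_integral_mult_right christoffel_kernel_moment) auto
  then show ?thesis
    by (simp add: sum_distrib_left sum_distrib_right power_add algebra_simps if_distrib
             cong: if_cong)
qed

lemma poly_eq_sum_one_minus_powers:
  fixes q :: "real poly"
  assumes "degree q \<le> m"
  obtains c where "\<And>t. poly q t = (\<Sum>j\<le>m. c j * (1 - t)^j)" and "c 0 = poly q 1"
proof
  define r where "r = q \<circ>\<^sub>p [:1, -1:]"
  have "degree r \<le> m"
    unfolding r_def using degree_pcompose_le[of q "[:1, -1:]"] assms by simp
  fix t
  have "poly q t = poly r (1 - t)"
    by (simp add: r_def poly_pcompose)
  also have "\<dots> = (\<Sum>j\<le>degree r. coeff r j * (1 - t)^j)"
    by (rule poly_altdef)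
  also have "\<dots> = (\<Sum>j\<le>m. coeff r j * (1 - t)^j)"
    using \<open>degree r \<le> m\<close> by (intro sum.mono_neutral_left) (auto simp: coeff_eq_0)
  finally show "poly q t = (\<Sum>j\<le>m. coeff (q \<circ>\<^sub>p [:1, -1:]) j * (1 - t)^j)"
    by (simp add: r_def)
qed simp

lemma christoffel_constant:
  "(fact m)^2 / (pochhammer (real n + 1) (Suc m) * pochhammer (real n + 2) m)
     = (real n + 1) * (fact n * fact m / fact (n + m + 1))^2"
proof -
  define F where "F = (fact (n + m + 1) :: real)"
  define N where "N = real n + 1"
  define P where "P = pochhammer N (Suc m)"
  define P' where "P' = pochhammer (real n + 2) m"
  have "P > 0" "P' > 0" "N > 0"
    unfolding P_def P'_def N_def by (simp_all add: pochhammer_pos)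
  have "F = fact n * P"
    using fact_add_eq_fact_mult_pochhammer[of n "Suc m"] by (simp add: F_def P_def N_def)
  moreover have "F = N * fact n * P'"
    using fact_add_eq_fact_mult_pochhammer[of "n + 1" m, where 'a = real]
    by (simp add: F_def P'_def N_def add_ac numeral_2_eq_2)
  ultimately have F_squared: "F^2 = N * (fact n)^2 * (P * P')"
    unfolding power2_eq_square by (metis mult.assoc mult.left_commute)
  show ?thesis
    unfolding F_def[symmetric] N_def[symmetric] P_def[symmetric] P'_def[symmetric]
      power_divide F_squared
    using \<open>P > 0\<close> \<open>P' > 0\<close> \<open>N > 0\<close> by (simp add: field_simps)
qed

lemma christoffel_bound:
  fixes q :: "real poly" and s :: real
  assumes "s \<le> 1" "degree q \<le> m"
  shows "(real n + 1) * (fact n * fact m / fact (n + m + 1))^2 * (1 - s)^(n + 1) * (poly q 1)^2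
           \<le> integral {s..1} (\<lambda>t. (1 - t)^n * (poly q t)^2)"
proof (cases "s = 1")
  case True
  then show ?thesis by simp
next
  case False
  with assms have "s < 1" by simp
  define K where "K = christoffel_kernel n m s"
  define A where "A = (1 - s)^(n + 1) * (fact m)^2 / pochhammer (real n + 1) (Suc m)"
  define K1 where "K1 = pochhammer (real n + 2) m"
  have "A > 0" "K1 > 0"
    unfolding A_def K1_def using \<open>s < 1\<close> by (simp_all add: pochhammer_pos)
  obtain c where q_expansion: "\<And>t. poly q t = (\<Sum>j\<le>m. c j * (1 - t)^j)" and "c 0 = poly q 1"
    using poly_eq_sum_one_minus_powers[OF assms(2)] by blast
  have "((\<lambda>t. (1 - t)^n * poly q t * K t) has_integral c 0 * A) {s..1}"
    using christoffel_kernel_reproducing[OF \<open>s < 1\<close>, where n = n and m = m and c = c]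
    by (simp only: K_def A_def q_expansion)
  moreover have "((\<lambda>t. (1 - t)^n * (K t)^2) has_integral K1 * A) {s..1}"
    using christoffel_kernel_reproducing[OF \<open>s < 1\<close>, where n = n and m = m and c =
        "\<lambda>k. (-1)^k * real (m choose k) * pochhammer (real k + real n + 2) m / (1 - s)^k"]
    by (simp add: K_def K1_def A_def christoffel_kernel_def power2_eq_square mult.assoc)
  moreover have "((\<lambda>t. (1 - t)^n * (poly q t)^2) has_integral
                   integral {s..1} (\<lambda>t. (1 - t)^n * (poly q t)^2)) {s..1}"
    by (intro integrable_integral integrable_continuous_interval continuous_intros)
  ultimately have "(c 0 * A)^2 \<le> integral {s..1} (\<lambda>t. (1 - t)^n * (poly q t)^2) * (K1 * A)"
    using \<open>A > 0\<close> \<open>K1 > 0\<close> \<open>s < 1\<close>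
    by (intro weighted_cauchy_schwarz_has_integral[where w = "\<lambda>t. (1 - t)^n"]) auto
  then have "(poly q 1)^2 * (A / K1) \<le> integral {s..1} (\<lambda>t. (1 - t)^n * (poly q t)^2)"
    using \<open>A > 0\<close> \<open>K1 > 0\<close> \<open>c 0 = poly q 1\<close> by (simp add: power2_eq_square field_simps)
  moreover have "A / K1 = (real n + 1) * (fact n * fact m / fact (n + m + 1))^2 * (1 - s)^(n + 1)"
  proof -
    have "A / K1 = (1 - s)^(n + 1) * ((fact m)^2 / (pochhammer (real n + 1) (Suc m) * K1))"
      unfolding A_def by simp
    then show ?thesis
      unfolding K1_def christoffel_constant by (simp only: ac_simps)
  qed
  ultimately show ?thesis
    by (simp add: mult_ac)
qed

lemma integral_one_minus_square_power_lower_bound: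
  fixes q :: "real poly" and s :: real
  assumes "0 \<le> s" "s \<le> 1" "degree q \<le> m"
  shows "(real n + 1) * (fact n * fact m / fact (n + m + 1))^2 * (1 - s)^(n + 1) * (1 + s)^n
           * (poly q 1)^2 \<le> integral {s..1} (\<lambda>t. (1 - t\<^sup>2)^n * (poly q t)^2)"
proof -
  have "(1 + s)^n * integral {s..1} (\<lambda>t. (1 - t)^n * (poly q t)^2)
      \<le> integral {s..1} (\<lambda>t. (1 - t\<^sup>2)^n * (poly q t)^2)"
    unfolding integral_mult_right[symmetric]
  proof (intro integral_le integrable_continuous_interval continuous_intros ballI)
    fix t assume "t \<in> {s..1}"
    then have "(1 + s)^n * (1 - t)^n \<le> (1 + t)^n * (1 - t)^n"
      using \<open>0 \<le> s\<close> by (intro mult_right_mono power_mono) auto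
    also have "\<dots> = (1 - t\<^sup>2)^n"
      by (simp add: power_mult_distrib[symmetric] power2_eq_square algebra_simps)
    finally show "(1 + s)^n * ((1 - t)^n * (poly q t)^2) \<le> (1 - t\<^sup>2)^n * (poly q t)^2"
      by (metis mult.assoc mult_right_mono zero_le_power2)
  qed
  moreover have "(1 + s)^n * ((real n + 1) * (fact n * fact m / fact (n + m + 1))^2 * (1 - s)^(n + 1)
                   * (poly q 1)^2) \<le> (1 + s)^n * integral {s..1} (\<lambda>t. (1 - t)^n * (poly q t)^2)"
    using christoffel_bound[OF assms(2,3)] \<open>0 \<le> s\<close> by (intro mult_left_mono) auto
  ultimately show ?thesis
    by (simp add: mult_ac)
qed

section \<open>Legendre polynomials\<close>

lemma pcompose_power: "(p ^ k) \<circ>\<^sub>p q = (p \<circ>\<^sub>p q) ^ k"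
  for p q :: "'a::comm_semiring_1 poly"
  by (induction k) (simp_all add: pcompose_1 pcompose_mult)

lemma higher_pderiv_pcompose_translation:
  fixes p :: "'a::idom poly"
  shows "(pderiv ^^ k) (p \<circ>\<^sub>p [:c, 1:]) = ((pderiv ^^ k) p) \<circ>\<^sub>p [:c, 1:]"
  by (induction k) (simp_all add: pderiv_pcompose pderiv_pCons)

lemma poly_higher_pderiv_eq_fact_coeff:
  fixes p :: "'a::{idom,semiring_char_0} poly"
  shows "poly ((pderiv ^^ k) p) c = fact k * coeff (p \<circ>\<^sub>p [:c, 1:]) k"
proof -
  have "poly ((pderiv ^^ k) p) c = coeff ((pderiv ^^ k) (p \<circ>\<^sub>p [:c, 1:])) 0"
    by (simp add: higher_pderiv_pcompose_translation)
  also have "\<dots> = fact k * coeff (p \<circ>\<^sub>p [:c, 1:]) k"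
    by (simp add: coeff_higher_pderiv pochhammer_fact)
  finally show ?thesis .
qed

lemma higher_pderiv_legendre_poly:
  "(pderiv ^^ n) (legendre_poly l)
     = smult (1 / (2 ^ l * fact l)) ((pderiv ^^ (n + l)) ([:-1, 0, 1:] ^ l))"
  unfolding legendre_poly_def by (simp add: higher_pderiv_smult funpow_add)

lemma degree_higher_pderiv_legendre_poly: "degree ((pderiv ^^ n) (legendre_poly l)) \<le> l - n"
proof -
  have "degree ([:-1, 0, 1:] ^ l :: real poly) \<le> 2 * l"
    using degree_power_le[of "[:-1, 0, 1:] :: real poly" l] by simp
  then show ?thesis
    unfolding higher_pderiv_legendre_poly degree_smult_eq degree_higher_pderiv by auto
qed

lemma poly_higher_pderiv_legendre_poly_one:
  assumes "n \<le> l"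
  shows "poly ((pderiv ^^ n) (legendre_poly l)) 1 = fact (l + n) / (2 ^ n * fact n * fact (l - n))"
proof -
  have translate: "[:-1, 0, 1:] \<circ>\<^sub>p [:1, 1:] = ([:0, 1:] * [:2, 1:] :: real poly)"
    by (simp add: pcompose_pCons)
  have "coeff (([:-1, 0, 1:] ^ l) \<circ>\<^sub>p [:1, 1:]) (n + l)
      = coeff (monom 1 l * [:2, 1:] ^ l :: real poly) (l + n)"
    unfolding pcompose_power translate power_mult_distrib by (simp add: monom_altdef add.commute)
  also have "\<dots> = real (l choose n) * 2 ^ (l - n)"
    by (simp add: coeff_monom_mult coeff_linear_poly_power assms)
  finally have "poly ((pderiv ^^ n) (legendre_poly l)) 1
      = fact (n + l) * (real (l choose n) * 2 ^ (l - n)) / (2 ^ l * fact l)"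
    unfolding higher_pderiv_legendre_poly poly_smult poly_higher_pderiv_eq_fact_coeff by simp
  also have "\<dots> = fact (l + n) / (2 ^ n * fact n * fact (l - n))"
  proof -
    have "(2::real) ^ l = 2 ^ n * 2 ^ (l - n)"
      by (simp add: power_add[symmetric] assms)
    then show ?thesis
      using assms by (simp add: binomial_fact field_simps)
  qed
  finally show ?thesis .
qed

lemma v_fun_squared:
  "\<bar>v_fun l n x\<bar>\<^sup>2 = (2 * real l + 1) / 2 * (fact (l - n) / fact (l + n))
      * ((1 - (sin x)\<^sup>2)^n * (poly ((pderiv ^^ n) (legendre_poly l)) (sin x))\<^sup>2)"
proof -
  have "(sqrt (1 - (sin x)\<^sup>2) ^ n)\<^sup>2 = (sqrt (1 - (sin x)\<^sup>2))\<^sup>2 ^ n"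
    by (simp only: power_mult[symmetric] mult.commute)
  also have "\<dots> = (1 - (sin x)\<^sup>2)^n"
    by (simp add: abs_square_le_1)
  finally have "(sqrt (1 - (sin x)\<^sup>2) ^ n)\<^sup>2 = (1 - (sin x)\<^sup>2)^n" .
  moreover have "((-1::real)^n)\<^sup>2 = 1"
    by (simp add: power_mult[symmetric] mult.commute[of n 2])
  ultimately show ?thesis
    unfolding v_fun_def assoc_legendre_def by (simp add: power_mult_distrib)
qed

lemma integral_v_fun_squared_cos:
  assumes "a \<le> pi / 2"
  shows "integral {a..pi/2} (\<lambda>x. \<bar>v_fun l n x\<bar>\<^sup>2 * cos x)
       = (2 * real l + 1) / 2 * (fact (l - n) / fact (l + n))
         * integral {sin a..1} (\<lambda>t. (1 - t\<^sup>2)^n * (poly ((pderiv ^^ n) (legendre_poly l)) t)\<^sup>2)"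
proof -
  define f where "f = (\<lambda>t. (1 - t\<^sup>2)^n * (poly ((pderiv ^^ n) (legendre_poly l)) t)\<^sup>2)"
  have "((\<lambda>x. cos x *\<^sub>R f (sin x)) has_integral integral {sin a..sin (pi/2)} f) {a..pi/2}"
    using assms unfolding f_def
    by (intro has_integral_substitution[where c = "-1" and d = 1] continuous_intros)
       (auto intro!: derivative_eq_intros)
  then have "integral {a..pi/2} (\<lambda>x. cos x * f (sin x)) = integral {sin a..1} f"
    by (simp add: integral_unique)
  moreover have "(\<lambda>x. \<bar>v_fun l n x\<bar>\<^sup>2 * cos x)
      = (\<lambda>x. (2 * real l + 1) / 2 * (fact (l - n) / fact (l + n)) * (cos x * f (sin x)))"
    unfolding v_fun_squared f_def by (simp add: fun_eq_iff)
  ultimately show ?thesis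
    by (simp add: f_def)
qed

lemma legendre_lower_bound_constant:
  assumes "n \<le> l"
  shows "(2 * real l + 1) / 2 * (fact (l - n) / fact (l + n))
           * ((real n + 1) * (fact n * fact (l - n) / fact (l + 1))^2
              * (poly ((pderiv ^^ n) (legendre_poly l)) 1)^2)
         = 2 * ((2 * real l + 1) * (real n + 1) / 2 ^ (2 * n + 2)
                * (fact (l - n) * fact (l + n) / (fact (l + 1))\<^sup>2))"
proof -
  define f g h F p where "f = (fact n :: real)" and "g = (fact (l - n) :: real)"
    and "h = (fact (l + n) :: real)" and "F = (fact (l + 1) :: real)" and "p = (2::real)^n"
  have "f > 0" "g > 0" "h > 0" "F > 0" "p > 0"
    unfolding f_def g_def h_def F_def p_def by simp_all
  have value_at_one: "poly ((pderiv ^^ n) (legendre_poly l)) 1 = h / (p * f * g)"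
    unfolding h_def p_def f_def g_def using poly_higher_pderiv_legendre_poly_one[OF assms] .
  have power_two: "(2::real) ^ (2 * n + 2) = 4 * p\<^sup>2"
    unfolding p_def by (simp flip: power_mult add: power_add mult.commute)
  have "L / 2 * (g / h) * (N * (f * g / F)^2 * (h / (p * f * g))^2)
      = 2 * (L * N / (4 * p\<^sup>2) * (g * h / F\<^sup>2))" for L N :: real
    using \<open>f > 0\<close> \<open>g > 0\<close> \<open>h > 0\<close> \<open>F > 0\<close> \<open>p > 0\<close>
    by (simp add: field_simps power2_eq_square)
  then show ?thesis
    unfolding value_at_one power_two
    unfolding f_def[symmetric] g_def[symmetric] h_def[symmetric] F_def[symmetric] .
qed

lemma cos_power_eq_sin: "cos (x::real) ^ (2 * k) = (1 - sin x)^k * (1 + sin x)^k"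
proof -
  have "(cos x)\<^sup>2 = (1 - sin x) * (1 + sin x)"
    using sin_cos_squared_add[of x] by (simp add: power2_eq_square algebra_simps)
  then show ?thesis
    unfolding power_mult by (simp add: power_mult_distrib)
qed

theorem proposition5p1:
  fixes a :: real and l n :: nat
  assumes "0 \<le> a" and "a \<le> pi / 2" and "1 \<le> n" and "n \<le> l"
  shows "integral {a..pi/2} (\<lambda>x. \<bar>v_fun l n x\<bar>\<^sup>2 * cos x)
           \<ge> (2 * real l + 1) * (real n + 1) / 2 ^ (2 * n + 2)
               * (fact (l - n) * fact (l + n) / (fact (l + 1))\<^sup>2) * cos a ^ (2 * n + 2)"
proof -
  define s where "s = sin a"
  define Q where "Q = (pderiv ^^ n) (legendre_poly l)"
  define K where "K = (2 * real l + 1) * (real n + 1) / 2 ^ (2 * n + 2)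
                        * (fact (l - n) * fact (l + n) / (fact (l + 1))\<^sup>2)"
  define C where "C = (2 * real l + 1) / 2 * (fact (l - n) / fact (l + n) :: real)"
  have "0 \<le> s" "s \<le> 1" "K \<ge> 0" "C \<ge> 0"
    unfolding s_def K_def C_def using assms(1,2) by (auto intro: sin_ge_zero)
  have "n + (l - n) + 1 = l + 1"
    using assms(4) by simp
  have constant_eq:
    "C * ((real n + 1) * (fact n * fact (l - n) / fact (l + 1))^2 * (poly Q 1)^2) = 2 * K"
    using legendre_lower_bound_constant[OF assms(4)] unfolding C_def K_def Q_def .
  have "K * cos a ^ (2 * n + 2) = K * ((1 - s)^(n + 1) * (1 + s)^(n + 1))"
    using cos_power_eq_sin[of a "n + 1"] by (simp add: s_def)
  also have "\<dots> \<le> 2 * K * ((1 - s)^(n + 1) * (1 + s)^n)"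
    using \<open>0 \<le> s\<close> \<open>s \<le> 1\<close> \<open>K \<ge> 0\<close>
    by (simp add: mult_ac mult_left_mono mult_right_mono)
  also have "\<dots> = C * ((real n + 1) * (fact n * fact (l - n) / fact (l + 1))^2
                       * (1 - s)^(n + 1) * (1 + s)^n * (poly Q 1)^2)"
    unfolding constant_eq[symmetric] by (simp only: mult_ac)
  also have "\<dots> \<le> C * integral {s..1} (\<lambda>t. (1 - t\<^sup>2)^n * (poly Q t)^2)"
    using integral_one_minus_square_power_lower_bound[OF \<open>0 \<le> s\<close> \<open>s \<le> 1\<close>
        degree_higher_pderiv_legendre_poly[of n l], where n = n] \<open>C \<ge> 0\<close>
    unfolding \<open>n + (l - n) + 1 = l + 1\<close> Q_def by (rule mult_left_mono)
  also have "\<dots> = integral {a..pi/2} (\<lambda>x. \<bar>v_fun l n x\<bar>\<^sup>2 * cos x)"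
    using integral_v_fun_squared_cos[OF assms(2)] by (simp add: C_def Q_def s_def)
  finally show ?thesis
    unfolding K_def .
qed

end
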